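(* Let $(P_n)_{n\ge0}$ be defined by $P_0(m)=m$ and $P_{n+1}(m)=P_n(m+1)+\sum_{i=0}^{n}P_i(m)P_{n-i}(m)$, and write $P_n(m)=\sum_{i=1}^{n+2}p^{(i)}_n m^{n+2-i}$, with $p^{(i)}_n=0$ for $i>n+2$. For every integer $i\ge 1$ let $a_i(z)=\sum_{n\ge 0}p^{(i)}_n z^n$ (a formal power series). Then the following equations hold: \[a_1=z a_1^2+1,\qquad a_1(0)=1,\] \[a_2=z a_1+2z a_1 a_2,\] and for every $i>2$, \[a_i=z^{i-1}\frac{a_1^{(i-2)}}{(i-2)!}+z^{i-2}\frac{a_1^{(i-3)}}{(i-3)!}+z^{i-2}\frac{a_2^{(i-3)}}{(i-3)!} +z\sum_{j=1}^{i-3}\sum_{k=0}^{i-3-j}(-1)^k\binom{k+j-1}{j-1}z^{i-3-j-k}\frac{a_{j+2}^{(i-3-j-k)}}{(i-3-j-k)!} +z\sum_{j=1}^{i}a_j\,a_{i-j+1}.\]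
   Context: $f^{(k)}$ denotes the $k$-th (formal) derivative of $f$ with respect to $z$, $f^{(0)}=f$. The coefficient $p^{(i)}_n$ is the $i$-th leading coefficient of $P_n$ (which has degree $n+1$); equivalently $p^{(i)}_n=c_{n,n+2-i}$, the number of $(n+2-i)$-contexts of size $n$. *)

theory Defs
  imports "HOL-Computational_Algebra.Computational_Algebra"
begin

fun Pn :: "nat \<Rightarrow> int poly" where
  "Pn 0 = [:0, 1:]"
| "Pn (Suc n) = pcompose (Pn n) [:1, 1:] + (\<Sum>i\<le>n. Pn i * Pn (n - i))"

definition pc :: "nat \<Rightarrow> nat \<Rightarrow> int" where
  "pc i n = (if 1 \<le> i \<and> i \<le> n + 2 then coeff (Pn n) (n + 2 - i) else 0)"

definition a :: "nat \<Rightarrow> rat fps" where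
  "a i = Abs_fps (\<lambda>n. of_int (pc i n))"

end

theory Submission
  imports Defs
begin

text \<open>Comparing coefficients of \<open>m^(n+3-i)\<close> in the recursion for \<open>P_(n+1)\<close> gives a
  recursion for \<open>p^(i)_(n+1)\<close>: the shift \<open>P_n(m+1)\<close> contributes
  \<open>\<Sum>i'<i. C(n+2-i', i-1-i') p^(i')_n\<close>, and the convolution contributes exactly the \<open>z^n\<close>
  coefficient of \<open>\<Sum>j. a_j a_(i+1-j)\<close>. On the series side, \<open>z^k f^(k) / k!\<close> has \<open>n\<close>-th
  coefficient \<open>C(n,k) f_n\<close>, so the binomial weights turn into derivative terms. For
  \<open>i' = j + 2 \<ge> 3\<close> the weight \<open>C(n-j, i-3-j)\<close> is not of this form; Vandermonde's identity
  with upper indices \<open>-j\<close> and \<open>n\<close> rewrites it as an alternating convolution of the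
  \<open>C(n,\<cdot>)\<close>, which produces the double sum.\<close>

lemma pcompose_monom: "pcompose (monom c l) q = smult c (q ^ l)"
  by (induction l) (auto simp: monom_Suc pcompose_pCons monom_0)

lemma coeff_linear_power_one:
  "coeff ([:1, 1:] ^ l) e = (of_nat (l choose e) :: 'a::comm_semiring_1)"
proof (cases "e \<le> l")
  case True
  then show ?thesis by (simp add: coeff_linear_poly_power)
next
  case False
  then show ?thesis by (simp add: coeff_eq_0 degree_linear_power binomial_eq_0)
qed

lemma coeff_pcompose_shift:
  fixes p :: "'a::comm_semiring_1 poly"
  assumes "degree p \<le> n"
  shows "coeff (pcompose p [:1, 1:]) e = (\<Sum>l\<le>n. coeff p l * of_nat (l choose e))"
proof -
  have "pcompose p [:1, 1:] = (\<Sum>l\<le>n. smult (coeff p l) ([:1, 1:] ^ l))"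
    by (subst (1) poly_as_sum_of_monoms'[OF assms, symmetric])
       (simp add: pcompose_sum pcompose_monom)
  then show ?thesis
    by (simp add: coeff_sum coeff_linear_power_one)
qed

lemma degree_Pn_le: "degree (Pn n) \<le> n + 1"
proof (induction n rule: less_induct)
  case (less n)
  show ?case
  proof (cases n)
    case (Suc m)
    have "degree (pcompose (Pn m) [:1, 1:]) \<le> n + 1"
      using degree_pcompose_le[of "Pn m" "[:1, 1:]"] less[of m] Suc by simp
    moreover have "degree (Pn i * Pn (m - i)) \<le> n + 1" if "i \<le> m" for i
      using degree_mult_le[of "Pn i" "Pn (m - i)"] less[of i] less[of "m - i"] that Suc by fastforce
    ultimately show ?thesis
      unfolding Suc Pn.simps by (intro degree_add_le degree_sum_le) auto
  qed simp
qed

lemma coeff_Pn_nonzero_le: "coeff (Pn n) l \<noteq> 0 \<Longrightarrow> l \<le> n + 1"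
  using le_degree degree_Pn_le order_trans by blast

lemma pc_eq_coeff: "1 \<le> i \<Longrightarrow> i \<le> n + 2 \<Longrightarrow> pc i n = coeff (Pn n) (n + 2 - i)"
  by (simp add: pc_def)

lemma pc_eq_0: "i = 0 \<or> n + 2 < i \<Longrightarrow> pc i n = 0"
  by (auto simp: pc_def)

lemma coeff_pcompose_Pn:
  assumes "1 \<le> i" "i \<le> n + 3"
  shows "coeff (pcompose (Pn n) [:1, 1:]) (n + 3 - i)
     = (\<Sum>i'=1..i-1. int ((n + 2 - i') choose (i - 1 - i')) * pc i' n)"
proof -
  define e where "e = n + 3 - i"
  have "coeff (pcompose (Pn n) [:1, 1:]) e = (\<Sum>l\<le>n+1. coeff (Pn n) l * int (l choose e))"
    by (rule coeff_pcompose_shift[OF degree_Pn_le])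
  also have "\<dots> = (\<Sum>l\<in>{l. e \<le> l \<and> l \<le> n+1}. coeff (Pn n) l * int (l choose e))"
    by (rule sum.mono_neutral_right) auto
  also have "\<dots> = (\<Sum>i'=1..i-1. int ((n + 2 - i') choose (i - 1 - i')) * pc i' n)"
  proof (rule sum.reindex_bij_witness_not_neutral[where S'="{}" and T'="{i'\<in>{1..i-1}. n + 2 < i'}"
        and j="\<lambda>l. n + 2 - l" and i="\<lambda>i'. n + 2 - i'"])
    fix l assume l: "l \<in> {l. e \<le> l \<and> l \<le> n+1}"
    then have "i - 1 - (n + 2 - l) = l - e" using assms by (auto simp: e_def)
    with l show "int ((n + 2 - (n + 2 - l)) choose (i - 1 - (n + 2 - l))) * pc (n + 2 - l) n
        = coeff (Pn n) l * int (l choose e)"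
      by (auto simp: pc_eq_coeff binomial_symmetric[symmetric])
  qed (use assms in \<open>auto simp: e_def pc_eq_0\<close>)
  finally show ?thesis by (simp add: e_def)
qed

lemma coeff_mult_Pn:
  assumes "1 \<le> i" "i \<le> n + 3" "t \<le> n"
  shows "coeff (Pn t * Pn (n - t)) (n + 3 - i) = (\<Sum>i'=1..i. pc i' t * pc (i + 1 - i') (n - t))"
proof -
  define e where "e = n + 3 - i"
  define s where "s = n - t"
  have "coeff (Pn t * Pn s) e = (\<Sum>x\<le>e. coeff (Pn t) x * coeff (Pn s) (e - x))"
    by (rule coeff_mult)
  also have "\<dots> = (\<Sum>x\<in>{x. x \<le> e \<and> x \<le> t + 1 \<and> e - x \<le> s + 1}. coeff (Pn t) x * coeff (Pn s) (e - x))"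
    by (rule sum.mono_neutral_right) (auto dest: coeff_Pn_nonzero_le)
  also have "\<dots> = (\<Sum>i'=1..i. pc i' t * pc (i + 1 - i') s)"
  proof (rule sum.reindex_bij_witness_not_neutral[where S'="{}"
        and T'="{i'\<in>{1..i}. t + 2 < i' \<or> s + 2 < i + 1 - i'}"
        and j="\<lambda>x. t + 2 - x" and i="\<lambda>i'. t + 2 - i'"])
    fix x assume x: "x \<in> {x. x \<le> e \<and> x \<le> t + 1 \<and> e - x \<le> s + 1}"
    then have "pc (t + 2 - x) t = coeff (Pn t) x"
      by (subst pc_eq_coeff) auto
    moreover have "pc (i + 1 - (t + 2 - x)) s = coeff (Pn s) (e - x)"
      using x assms by (subst pc_eq_coeff) (auto simp: e_def s_def intro: arg_cong[where f="coeff _"])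
    ultimately show "pc (t + 2 - x) t * pc (i + 1 - (t + 2 - x)) s = coeff (Pn t) x * coeff (Pn s) (e - x)"
      by simp
  qed (use assms in \<open>auto simp: e_def s_def pc_eq_0\<close>)
  finally show ?thesis by (simp add: e_def s_def)
qed

lemma pc_Suc:
  "pc i (Suc n) = (\<Sum>i'=1..i-1. int ((n + 2 - i') choose (i - 1 - i')) * pc i' n)
     + (\<Sum>t\<le>n. \<Sum>i'=1..i. pc i' t * pc (i + 1 - i') (n - t))"
proof -
  consider "i = 0" | "n + 3 < i" | "1 \<le> i \<and> i \<le> n + 3" by linarith
  then show ?thesis
  proof cases
    case 1
    then show ?thesis by (simp add: pc_eq_0)
  next
    case 2
    have shift_vanishes: "int ((n + 2 - i') choose (i - 1 - i')) * pc i' n = 0" for i'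
      using 2 by (cases "i' \<le> n + 2") (simp_all add: pc_eq_0 binomial_eq_0)
    have conv_vanishes: "pc i' t * pc (i + 1 - i') (n - t) = 0" if "t \<le> n" for t i'
      using 2 that by (cases "i' \<le> t + 2") (simp_all add: pc_eq_0)
    have "(\<Sum>i'=1..i-1. int ((n + 2 - i') choose (i - 1 - i')) * pc i' n) = 0"
      by (simp only: shift_vanishes sum.neutral_const)
    moreover have "(\<Sum>t\<le>n. \<Sum>i'=1..i. pc i' t * pc (i + 1 - i') (n - t)) = 0"
      by (intro sum.neutral ballI conv_vanishes) simp
    moreover have "pc i (Suc n) = 0"
      using 2 by (simp add: pc_eq_0)
    ultimately show ?thesis
      by simp
  next
    case 3
    then have "pc i (Suc n) = coeff (Pn (Suc n)) (n + 3 - i)"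
      by (subst pc_eq_coeff) (auto simp: eval_nat_numeral)
    also have "\<dots> = coeff (pcompose (Pn n) [:1, 1:]) (n + 3 - i)
        + (\<Sum>t\<le>n. coeff (Pn t * Pn (n - t)) (n + 3 - i))"
      by (simp only: Pn.simps coeff_add coeff_sum)
    finally show ?thesis
      using 3 by (simp add: coeff_pcompose_Pn coeff_mult_Pn)
  qed
qed

lemma a_nth: "a i $ n = of_int (pc i n)"
  by (simp add: a_def)

lemma a_nth_Suc:
  "a i $ Suc n = (\<Sum>i'=1..i-1. of_nat ((n + 2 - i') choose (i - 1 - i')) * a i' $ n)
     + (\<Sum>j=1..i. a j * a (i - j + 1)) $ n"
proof -
  have "(\<Sum>j=1..i. a j * a (i - j + 1)) $ n = (\<Sum>j=1..i. \<Sum>t\<le>n. a j $ t * a (i + 1 - j) $ (n - t))"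
    by (auto simp: fps_sum_nth fps_mult_nth atLeast0AtMost Suc_diff_le intro!: sum.cong)
  also have "\<dots> = of_int (\<Sum>t\<le>n. \<Sum>i'=1..i. pc i' t * pc (i + 1 - i') (n - t))"
    by (subst sum.swap) (simp add: a_nth)
  finally show ?thesis
    by (simp add: a_nth pc_Suc)
qed

lemma fps_deriv_funpow_nth:
  "(fps_deriv ^^ k) (f :: 'a::comm_semiring_1 fps) $ n = pochhammer (of_nat n + 1) k * f $ (n + k)"
proof (induction k arbitrary: n)
  case (Suc k)
  then show ?case by (simp add: pochhammer_rec ac_simps)
qed simp

lemma fps_X_power_deriv_funpow_nth:
  "(fps_X ^ k * fps_const (1 / fact k) * (fps_deriv ^^ k) (f :: 'a::field_char_0 fps)) $ N
    = of_nat (N choose k) * f $ N"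
proof (cases "k \<le> N")
  case True
  have "(of_nat (N choose k) :: 'a) = pochhammer (of_nat (N - k) + 1) k / fact k"
    using True by (simp add: binomial_gbinomial gbinomial_pochhammer')
  then show ?thesis
    using True by (simp add: mult.assoc fps_X_power_mult_nth fps_deriv_funpow_nth)
qed (simp add: mult.assoc fps_X_power_mult_nth binomial_eq_0)

lemma fps_X_power_Suc_deriv_funpow_nth:
  "(fps_X ^ Suc k * fps_const (1 / fact k) * (fps_deriv ^^ k) (f :: 'a::field_char_0 fps)) $ Suc N
    = of_nat (N choose k) * f $ N"
  using fps_X_power_deriv_funpow_nth[of k f N] by (simp add: mult.assoc)

lemma fps_const_X_power_deriv_funpow_nth:
  "(fps_const c * fps_X ^ k * fps_const (1 / fact k) * (fps_deriv ^^ k) (f :: 'a::field_char_0 fps)) $ N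
    = c * of_nat (N choose k) * f $ N"
  using fps_X_power_deriv_funpow_nth[of k f N] by (simp add: mult.assoc)

lemma binomial_diff_alternating_convolution:
  fixes N j d :: nat
  assumes "1 \<le> j" "j \<le> N"
  shows "(of_nat ((N - j) choose d) :: 'a::field_char_0)
    = (\<Sum>k=0..d. (-1)^k * of_nat ((k + j - 1) choose (j - 1)) * of_nat (N choose (d - k)))"
proof -
  have "(of_nat ((N - j) choose d) :: 'a) = (- of_nat j + of_nat N) gchoose d"
    using assms by (simp add: binomial_gbinomial)
  also have "\<dots> = (\<Sum>k=0..d. (- of_nat j gchoose k) * (of_nat N gchoose (d - k)))"
    by (rule gbinomial_Vandermonde[symmetric])
  also have "\<dots> = (\<Sum>k=0..d. (-1)^k * of_nat ((k + j - 1) choose (j - 1)) * of_nat (N choose (d - k)))"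
  proof (intro sum.cong refl)
    fix k
    have "(k + j - 1) choose k = (k + j - 1) choose (j - 1)"
      using assms by (subst binomial_symmetric) auto
    moreover have "(of_nat j + of_nat k - 1 :: 'a) = of_nat (k + j - 1)"
      using assms by (simp add: algebra_simps)
    ultimately show "(- of_nat j gchoose k) * (of_nat N gchoose (d - k))
      = (-1)^k * of_nat ((k + j - 1) choose (j - 1)) * (of_nat (N choose (d - k)) :: 'a)"
      by (simp add: gbinomial_minus flip: binomial_gbinomial)
  qed
  finally show ?thesis .
qed

lemma a_nth_Suc_gt_2:
  assumes "2 < i"
  shows "a i $ Suc N = of_nat (N choose Suc (i - 3)) * a 1 $ N + of_nat (N choose (i - 3)) * a 1 $ N
    + of_nat (N choose (i - 3)) * a 2 $ N
    + (\<Sum>j=1..i-3. \<Sum>k=0..i-3-j. (-1)^k * of_nat ((k + j - 1) choose (j - 1))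
        * of_nat (N choose (i - 3 - j - k)) * a (j + 2) $ N)
    + (\<Sum>j=1..i. a j * a (i - j + 1)) $ N"
proof -
  define m where "m = i - 3"
  with assms have i: "i = m + 3"
    by simp
  define T where "T i' = of_nat ((N + 2 - i') choose (i - 1 - i')) * a i' $ N" for i'
  have "(\<Sum>i'=1..m+2. f i') = f 1 + f 2 + (\<Sum>j=1..m. f (j + 2))" for f :: "nat \<Rightarrow> rat"
    by (induction m) (simp_all add: numeral_2_eq_2)
  then have "(\<Sum>i'=1..i-1. T i') = T 1 + T 2 + (\<Sum>j=1..i-3. T (j + 2))"
    by (simp add: i)
  moreover have "T 1 = of_nat (N choose Suc (i - 3)) * a 1 $ N + of_nat (N choose (i - 3)) * a 1 $ N"
    by (simp add: T_def i algebra_simps)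
  moreover have "T 2 = of_nat (N choose (i - 3)) * a 2 $ N"
    by (simp add: T_def i)
  moreover have "T (j + 2) = (\<Sum>k=0..i-3-j. (-1)^k * of_nat ((k + j - 1) choose (j - 1))
      * of_nat (N choose (i - 3 - j - k)) * a (j + 2) $ N)" if "1 \<le> j" for j
  proof (cases "j \<le> N")
    \<comment> \<open>for \<open>j > N\<close> the weight is meaningless, but then \<open>a (j + 2) $ N = 0\<close>\<close>
    case True
    then show ?thesis
      using binomial_diff_alternating_convolution[of j N "m - j", where 'a=rat] that
      by (simp add: T_def i sum_distrib_right)
  qed (simp add: T_def a_nth pc_eq_0)
  ultimately show ?thesis
    unfolding a_nth_Suc[of i N] T_def[symmetric] by simp
qed

lemma a_1_nth_0: "a 1 $ 0 = 1"
  by (simp add: a_nth pc_def)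

lemma a_nth_0: "2 \<le> i \<Longrightarrow> a i $ 0 = 0"
  by (simp add: a_nth pc_def)

lemma a_1_eq: "a 1 = fps_X * (a 1)^2 + 1"
proof (rule fps_ext)
  fix n
  show "a 1 $ n = (fps_X * (a 1)^2 + 1) $ n"
    using a_1_nth_0 a_nth_Suc[of 1] by (cases n) (simp_all add: power2_eq_square)
qed

lemma a_2_eq: "a 2 = fps_X * a 1 + 2 * fps_X * a 1 * a 2"
proof (rule fps_ext)
  fix n
  show "a 2 $ n = (fps_X * a 1 + 2 * fps_X * a 1 * a 2) $ n"
    by (cases n) (simp_all add: a_nth_0 a_nth_Suc numeral_2_eq_2 algebra_simps)
qed

theorem theorem1:
  shows "a 1 = fps_X * (a 1)^2 + 1 \<and> fps_nth (a 1) 0 = 1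
    \<and> a 2 = fps_X * a 1 + 2 * fps_X * a 1 * a 2
    \<and> (\<forall>i>2. a i =
          fps_X ^ (i - 1) * fps_const (1 / fact (i - 2)) * (fps_deriv ^^ (i - 2)) (a 1)
        + fps_X ^ (i - 2) * fps_const (1 / fact (i - 3)) * (fps_deriv ^^ (i - 3)) (a 1)
        + fps_X ^ (i - 2) * fps_const (1 / fact (i - 3)) * (fps_deriv ^^ (i - 3)) (a 2)
        + fps_X * (\<Sum>j=1..i-3. \<Sum>k=0..i-3-j.
             fps_const ((-1) ^ k * of_nat ((k + j - 1) choose (j - 1)))
             * fps_X ^ (i - 3 - j - k)
             * fps_const (1 / fact (i - 3 - j - k))
             * (fps_deriv ^^ (i - 3 - j - k)) (a (j + 2)))
        + fps_X * (\<Sum>j=1..i. a j * a (i - j + 1)))"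
proof (intro conjI allI impI a_1_eq a_1_nth_0 a_2_eq fps_ext, goal_cases)
  case (1 i n)
  then have "i - 1 = Suc (Suc (i - 3))" "i - 2 = Suc (i - 3)"
    by auto
  with 1 show ?case
    by (cases n) (simp_all only: fps_add_nth fps_X_mult_nth fps_sum_nth
        fps_X_power_Suc_deriv_funpow_nth fps_const_X_power_deriv_funpow_nth
        a_nth_Suc_gt_2 nat.distinct if_False diff_Suc_1, simp add: a_nth_0)
qed

end
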